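(* For every $\varepsilon>0$ and $g\in C([0,1])$, $$\|E_1 g\|_{L^{4+\varepsilon}(\mathbb{R}^2)}\lesssim_\varepsilon\|g\|_{L^4}.$$
   Context: Fix $\varphi\in C_c^\infty(\mathbb{R})$ supported in a small open neighborhood of $[0,1]$ with $\varphi\equiv1$ on $[0,1]$; set $\varphi_{n,m}(x)=\varphi(x)e^{2\pi i nx}e^{2\pi i mx^2}$ for $n,m\in\mathbb{Z}$; $\chi_n$ is the indicator of $[n,n+1)$. Then $E_1 g(x,t)=\sum_{n,m\in\mathbb{Z}}\langle g,\varphi_{n,m}\rangle\chi_n(x)\chi_m(t)$, with $\langle f,h\rangle=\int f\bar h$. *)

theory Defs
  imports "HOL-Analysis.Analysis"
begin

definition smooth_compact_support :: "(real \<Rightarrow> real) \<Rightarrow> bool" where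
  "smooth_compact_support \<phi> \<longleftrightarrow>
     (\<forall>k. ((deriv ^^ k) \<phi>) differentiable_on UNIV) \<and> compact (closure {x. \<phi> x \<noteq> 0})"

definition phi_nm :: "(real \<Rightarrow> real) \<Rightarrow> int \<Rightarrow> int \<Rightarrow> real \<Rightarrow> complex" where
  "phi_nm \<phi> n m x = complex_of_real (\<phi> x) * exp (2 * pi * \<i> * of_int n * x)
                      * exp (2 * pi * \<i> * of_int m * x ^ 2)"

definition chi :: "int \<Rightarrow> real \<Rightarrow> complex" where
  "chi n x = indicator {real_of_int n..<real_of_int n + 1} x"

definition ext0 :: "(real \<Rightarrow> complex) \<Rightarrow> real \<Rightarrow> complex" where
  "ext0 g x = (if x \<in> {0..1} then g x else 0)"

definition inner_L2 :: "(real \<Rightarrow> complex) \<Rightarrow> (real \<Rightarrow> complex) \<Rightarrow> complex" where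
  "inner_L2 f h = (LINT x|lborel. f x * cnj (h x))"

definition E1 :: "(real \<Rightarrow> real) \<Rightarrow> (real \<Rightarrow> complex) \<Rightarrow> real \<times> real \<Rightarrow> complex" where
  "E1 \<phi> g = (\<lambda>(x, t). \<Sum>\<^sub>\<infinity>(n, m)\<in>(UNIV :: (int \<times> int) set).
       inner_L2 (ext0 g) (phi_nm \<phi> n m) * chi n x * chi m t)"

definition Lp_norm :: "'a measure \<Rightarrow> real \<Rightarrow> ('a \<Rightarrow> complex) \<Rightarrow> ennreal" where
  "Lp_norm M p f =
     (let I = (\<integral>\<^sup>+ z. ennreal (cmod (f z) powr p) \<partial>M)
      in if I = \<infinity> then \<infinity> else ennreal (enn2real I powr (1 / p)))"

end

(*
  Because g vanishes outside [0,1] and phi = 1 there, E_1 g is the step function equal to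
  a(n,m) = int g(x) e(-(n x + m x^2)) dx on [n,n+1) x [m,m+1), where e(t) = exp(2 pi i t).
  So the claim is sum_{n,m} |a(n,m)|^(2s) <~ ||g||_4^(2s) for s > 2.

  Substituting x = y + u in |a(n,m)|^2 gives |a(n,m)|^2 = int e(-n u) Psi_m(u) du with
  Psi_m(u) = int g(y + u) conj(g(y)) e(-m u (2y + u)) dy, and Psi_m(-u) = conj(Psi_m(u)), so
  |a(n,m)|^2 = 2 Re P(n,m) with P(n,m) the integral over u > 0. Split u > 0 into the dyadic
  intervals (2^-(j+1), 2^-j] and let B_j(n,m) be the pieces of P(n,m). Trivially
  |B_j| <= 2^-(j+1) ||g||_2^2. Bessel's inequality in n, and then in m (Psi_m(u) is a Fourier
  coefficient at frequency 2mu of a function living on an interval of length 1/(2u)), gives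
  sum_{n,m} |B_j|^2 <= ||g||_4^4 / 2. Hence sum_{n,m} |B_j|^s decays geometrically in j, and a
  weighted power mean inequality sums the pieces; ||g||_2^2 <= ||g||_4^2 finishes the bound.
*)

theory Submission
  imports Defs
begin

section \<open>Additive characters and Bessel's inequality on an interval\<close>

definition cis2pi :: "real \<Rightarrow> complex" where
  "cis2pi t = cis (2 * pi * t)"

lemma cis2pi_add: "cis2pi (a + b) = cis2pi a * cis2pi b"
  by (simp add: cis2pi_def cis_mult distrib_left)

lemma cnj_cis2pi: "cnj (cis2pi t) = cis2pi (- t)"
  by (simp add: cis2pi_def cis_cnj)

lemma norm_cis2pi [simp]: "norm (cis2pi t) = 1"
  by (simp add: cis2pi_def)

lemma cis2pi_of_int [simp]: "cis2pi (of_int k) = 1"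
  unfolding cis2pi_def by (rule cis_multiple_2pi) simp

lemma cis2pi_zero [simp]: "cis2pi 0 = 1"
  by (simp add: cis2pi_def)

lemma cis2pi_conv_exp: "cis2pi t = exp (of_real t * (2 * of_real pi * \<i>))"
  by (simp add: cis2pi_def cis_conv_exp mult_ac)

lemma continuous_on_cis2pi: "continuous_on A cis2pi"
  unfolding cis2pi_def by (intro continuous_intros)

lemma borel_measurable_cis2pi [measurable (raw)]:
  "f \<in> borel_measurable M \<Longrightarrow> (\<lambda>x. cis2pi (f x)) \<in> borel_measurable M"
  using borel_measurable_continuous_onI[OF continuous_on_cis2pi] measurable_compose by blast

lemma borel_measurable_cnj [measurable (raw)]:
  "f \<in> borel_measurable M \<Longrightarrow> (\<lambda>x. cnj (f x :: complex)) \<in> borel_measurable M"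
  using borel_measurable_continuous_onI[OF continuous_on_cnj[OF continuous_on_id]]
    measurable_compose by blast

lemma integrable_bounded_vanishing_outside_Icc:
  fixes f :: "real \<Rightarrow> 'b::{banach,second_countable_topology}"
  assumes "f \<in> borel_measurable lborel" "\<And>x. norm (f x) \<le> B"
    and "\<And>x. x \<notin> {a..b} \<Longrightarrow> f x = 0"
  shows "integrable lborel f"
  by (rule integrableI_bounded_set[where A="{a..b}" and B=B])
     (use assms in \<open>auto simp: emeasure_lborel_Icc_eq\<close>)

lemma lborel_integral_shift:
  fixes g :: "real \<Rightarrow> 'a::{banach,second_countable_topology}"
  shows "(LINT x|lborel. g (x + u)) = (LINT x|lborel. g x)"
  using lborel_integral_real_affine[of 1 g u] by (simp add: add.commute)

lemma lborel_integral_reflect: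
  fixes g :: "real \<Rightarrow> 'a::{banach,second_countable_topology}"
  shows "(LINT x|lborel. g (- x)) = (LINT x|lborel. g x)"
  using lborel_integral_real_affine[of "-1" g 0] by simp

lemma has_integral_cis2pi_period:
  fixes k :: int and lam c :: real
  assumes lam: "lam > 0"
  shows "((\<lambda>x. cis2pi (of_int k * lam * x)) has_integral (if k = 0 then 1 / lam else 0))
           {c..c + 1/lam}"
proof (cases "k = 0")
  case True
  then show ?thesis
    using lam has_integral_const_real[of "1::complex" c "c + 1/lam"]
    by (simp add: content_real scaleR_conv_of_real)
next
  case False
  define \<alpha> where "\<alpha> = of_real (of_int k * lam) * (2 * of_real pi * \<i>)"
  have "\<alpha> \<noteq> 0" using False lam by (simp add: \<alpha>_def)
  have cis2pi_eq: "cis2pi (of_int k * lam * x) = exp (of_real x * \<alpha>)" for x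
    by (simp add: cis2pi_conv_exp \<alpha>_def mult_ac)
  define F where "F x = cis2pi (of_int k * lam * x) / \<alpha>" for x
  have "(F has_vector_derivative cis2pi (of_int k * lam * x)) (at x within {c..c+1/lam})" for x
  proof -
    have "((\<lambda>z. exp (z * \<alpha>) / \<alpha>) has_field_derivative exp (of_real x * \<alpha>)) (at (of_real x))"
      using \<open>\<alpha> \<noteq> 0\<close> by (auto intro!: derivative_eq_intros)
    then show ?thesis
      unfolding F_def cis2pi_eq by (rule has_vector_derivative_real_field)
  qed
  then have "((\<lambda>x. cis2pi (of_int k * lam * x)) has_integral (F (c + 1/lam) - F c)) {c..c + 1/lam}"
    using lam by (intro fundamental_theorem_of_calculus) auto
  moreover have "F (c + 1/lam) = F c"
  proof -
    have "of_int k * lam * (c + 1/lam) = of_int k * lam * c + of_int k"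
      using lam by (simp add: field_simps)
    then show ?thesis
      by (simp add: F_def cis2pi_add)
  qed
  ultimately show ?thesis using False by simp
qed

lemma integral_cis2pi_orthogonal:
  fixes m k :: int and lam c :: real
  assumes lam: "lam > 0"
  shows "(LINT x|lborel. indicator {c..c+1/lam} x *
            (cis2pi (of_int m * lam * x) * cnj (cis2pi (of_int k * lam * x))))
         = (if m = k then 1/lam else 0)"
proof -
  have integrable: "set_integrable lborel {c..c+1/lam} (\<lambda>x. cis2pi (of_int (m - k) * lam * x))"
    unfolding set_integrable_def cis2pi_def
    by (rule borel_integrable_compact) (auto intro!: continuous_intros)
  have "cis2pi (of_int m * lam * x) * cnj (cis2pi (of_int k * lam * x))
        = cis2pi (of_int (m - k) * lam * x)" for x
    by (simp add: cnj_cis2pi cis2pi_add[symmetric] algebra_simps)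
  then have "(LINT x|lborel. indicator {c..c+1/lam} x *
               (cis2pi (of_int m * lam * x) * cnj (cis2pi (of_int k * lam * x))))
             = (LINT x:{c..c+1/lam}|lborel. cis2pi (of_int (m - k) * lam * x))"
    unfolding set_lebesgue_integral_def
    by (intro Bochner_Integration.integral_cong) (auto simp: indicator_def)
  also have "\<dots> = integral {c..c+1/lam} (\<lambda>x. cis2pi (of_int (m - k) * lam * x))"
    by (rule set_borel_integral_eq_integral(2)[OF integrable])
  also have "\<dots> = (if m = k then 1/lam else 0)"
    using integral_unique[OF has_integral_cis2pi_period[OF lam, of "m - k" c]] by simp
  finally show ?thesis .
qed

lemma integral_norm_square_cis2pi_sum:
  fixes a :: "int \<Rightarrow> complex" and lam c :: real
  assumes lam: "lam > 0" and N: "finite N"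
  shows "(LINT x|lborel. indicator {c..c+1/lam} x * (cmod (\<Sum>m\<in>N. a m * cis2pi (of_int m * lam * x)))\<^sup>2)
         = (\<Sum>m\<in>N. (cmod (a m))\<^sup>2) / lam"
proof -
  define e where "e m k x = indicator {c..c+1/lam} x *
    (cis2pi (of_int m * lam * x) * cnj (cis2pi (of_int k * lam * x)))" for m k :: int and x
  have "complex_of_real (indicator {c..c+1/lam} x * (cmod (\<Sum>m\<in>N. a m * cis2pi (of_int m * lam * x)))\<^sup>2)
        = (\<Sum>m\<in>N. \<Sum>k\<in>N. a m * cnj (a k) * e m k x)" for x
    unfolding of_real_mult complex_norm_square
    by (cases "x \<in> {c..c+1/lam}") (simp_all add: e_def sum_product mult_ac)
  moreover have "integrable lborel (e m k)" for m k
    unfolding e_def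
    by (rule integrable_bounded_vanishing_outside_Icc[where B=1 and a=c and b="c+1/lam"],
        measurable) (auto simp: norm_mult indicator_def)
  moreover have "(LINT x|lborel. e m k x) = (if m = k then 1/lam else 0)" for m k
    unfolding e_def by (rule integral_cis2pi_orthogonal[OF lam])
  ultimately have "complex_of_real (LINT x|lborel. indicator {c..c+1/lam} x *
                     (cmod (\<Sum>m\<in>N. a m * cis2pi (of_int m * lam * x)))\<^sup>2)
                   = (\<Sum>m\<in>N. \<Sum>k\<in>N. a m * cnj (a k) * (if m = k then 1/lam else 0))"
    by (simp add: integral_complex_of_real[symmetric] Bochner_Integration.integral_sum
        Bochner_Integration.integrable_sum del: integral_complex_of_real)
  also have "\<dots> = complex_of_real ((\<Sum>m\<in>N. (cmod (a m))\<^sup>2) / lam)"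
    using N
    by (simp add: complex_norm_square[symmetric] if_distrib sum.delta sum_divide_distrib cong: if_cong)
  finally show ?thesis
    by (rule of_real_eq_iff[THEN iffD1])
qed

lemma integral_norm_diff_square:
  fixes h T :: "'a \<Rightarrow> complex"
  assumes "integrable M (\<lambda>x. (cmod (h x))\<^sup>2)" "integrable M (\<lambda>x. h x * cnj (T x))"
    and "integrable M (\<lambda>x. (cmod (T x))\<^sup>2)"
  shows "(LINT x|M. (cmod (h x - T x))\<^sup>2)
         = (LINT x|M. (cmod (h x))\<^sup>2) - 2 * Re (LINT x|M. h x * cnj (T x)) + (LINT x|M. (cmod (T x))\<^sup>2)"
proof -
  have "(cmod (h x - T x))\<^sup>2 = (cmod (h x))\<^sup>2 - 2 * Re (h x * cnj (T x)) + (cmod (T x))\<^sup>2" for x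
    by (simp only: cmod_power2) (simp add: power2_eq_square algebra_simps)
  moreover have "integrable M (\<lambda>x. 2 * Re (h x * cnj (T x)))"
    using assms(2) by (intro integrable_mult_right integrable_Re)
  ultimately show ?thesis
    using assms
    by (simp only: Bochner_Integration.integral_add Bochner_Integration.integral_diff
        Bochner_Integration.integrable_diff integral_mult_right_zero integral_Re)
qed

lemma integral_mult_cnj_cis2pi_sum:
  fixes h :: "real \<Rightarrow> complex" and b :: "int \<Rightarrow> complex" and lam c B :: real
  assumes lam: "lam > 0" and N: "finite N" and h_meas [measurable]: "h \<in> borel_measurable lborel"
    and h_bound: "\<And>x. norm (h x) \<le> B" and h_supp: "\<And>x. x \<notin> {c..c+1/lam} \<Longrightarrow> h x = 0"
  shows "(LINT x|lborel. h x * cnj (indicator {c..c+1/lam} x * (\<Sum>m\<in>N. b m * cis2pi (of_int m * lam * x))))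
         = (\<Sum>m\<in>N. cnj (b m) * (LINT x|lborel. h x * cis2pi (- (of_int m * lam * x))))"
proof -
  have "h x * cnj (indicator {c..c+1/lam} x * (\<Sum>m\<in>N. b m * cis2pi (of_int m * lam * x)))
        = (\<Sum>m\<in>N. cnj (b m) * (h x * cis2pi (- (of_int m * lam * x))))" for x
    using h_supp[of x] by (cases "x \<in> {c..c+1/lam}") (auto simp: cnj_cis2pi sum_distrib_left mult_ac)
  moreover have "integrable lborel (\<lambda>x. h x * cis2pi (- (of_int m * lam * x)))" for m :: int
    by (rule integrable_bounded_vanishing_outside_Icc[where B=B and a=c and b="c+1/lam"])
       (auto simp: norm_mult h_bound h_supp)
  ultimately show ?thesis by simp
qed

lemma bessel_inequality:
  fixes h :: "real \<Rightarrow> complex" and N :: "int set" and lam c B :: real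
  assumes lam: "lam > 0" and N: "finite N" and h_meas [measurable]: "h \<in> borel_measurable lborel"
    and h_bound: "\<And>x. norm (h x) \<le> B" and h_supp: "\<And>x. x \<notin> {c..c+1/lam} \<Longrightarrow> h x = 0"
  shows "lam * (\<Sum>m\<in>N. (cmod (LINT x|lborel. h x * cis2pi (- (of_int m * lam * x))))\<^sup>2)
           \<le> (LINT x|lborel. (cmod (h x))\<^sup>2)"
proof -
  define S where "S = {c..c+1/lam}"
  define a where "a m = (LINT x|lborel. h x * cis2pi (- (of_int m * lam * x)))" for m :: int
  define T where "T x = indicator S x * (\<Sum>m\<in>N. of_real lam * a m * cis2pi (of_int m * lam * x))"
    for x
  define \<sigma> where "\<sigma> = lam * (\<Sum>m\<in>N. (cmod (a m))\<^sup>2)"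
  define B\<^sub>T where "B\<^sub>T = (\<Sum>m\<in>N. cmod (of_real lam * a m))"
  have "0 \<le> B" using h_bound[of 0] norm_ge_zero order_trans by blast
  have "0 \<le> B\<^sub>T" by (simp add: B\<^sub>T_def sum_nonneg)
  have T_bound: "norm (T x) \<le> B\<^sub>T" for x
    unfolding T_def B\<^sub>T_def norm_mult
    by (rule order_trans[OF _ order_trans[OF norm_sum sum_mono]]) (auto simp: indicator_def norm_mult)
  have T_supp: "x \<notin> S \<Longrightarrow> T x = 0" for x by (simp add: T_def)
  have [measurable]: "T \<in> borel_measurable lborel" unfolding T_def S_def by measurable
  have "(LINT x|lborel. h x * cnj (T x)) = (\<Sum>m\<in>N. cnj (of_real lam * a m) * a m)"
    unfolding T_def S_def a_def by (rule integral_mult_cnj_cis2pi_sum[OF lam N h_meas h_bound h_supp])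
  then have h_T: "(LINT x|lborel. h x * cnj (T x)) = of_real \<sigma>"
    by (simp add: \<sigma>_def sum_distrib_left complex_norm_square[symmetric] mult_ac)
  have T_T: "(LINT x|lborel. (cmod (T x))\<^sup>2) = \<sigma>"
  proof -
    have "(cmod (T x))\<^sup>2 = indicator S x * (cmod (\<Sum>m\<in>N. (of_real lam * a m) * cis2pi (of_int m * lam * x)))\<^sup>2"
      for x by (simp add: T_def norm_mult power_mult_distrib indicator_def)
    moreover have "(\<Sum>m\<in>N. (cmod (of_real lam * a m))\<^sup>2) / lam = \<sigma>"
      unfolding \<sigma>_def sum_divide_distrib sum_distrib_left
      using lam by (intro sum.cong) (auto simp: norm_mult power2_eq_square field_simps)
    ultimately show ?thesis
      using integral_norm_square_cis2pi_sum[OF lam N, where c=c and a="\<lambda>m. of_real lam * a m"]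
      by (simp add: S_def)
  qed
  have integrable: "integrable lborel g"
    if "g \<in> borel_measurable lborel" "\<And>x. norm (g x) \<le> C" "\<And>x. x \<notin> S \<Longrightarrow> g x = 0"
    for g :: "real \<Rightarrow> 'b::{banach,second_countable_topology}" and C
    using that unfolding S_def by (rule integrable_bounded_vanishing_outside_Icc)
  have "0 \<le> (LINT x|lborel. (cmod (h x - T x))\<^sup>2)" by simp
  also have "\<dots> = (LINT x|lborel. (cmod (h x))\<^sup>2) - 2 * Re (of_real \<sigma>) + \<sigma>"
  proof (subst integral_norm_diff_square)
    show "integrable lborel (\<lambda>x. (cmod (h x))\<^sup>2)"
      by (rule integrable[of _ "B\<^sup>2"]) (auto simp: h_supp S_def power_mono h_bound)
    show "integrable lborel (\<lambda>x. h x * cnj (T x))"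
      by (rule integrable[of _ "B * B\<^sub>T"])
         (use \<open>0 \<le> B\<close> in \<open>auto simp: h_supp S_def norm_mult intro!: mult_mono h_bound T_bound\<close>)
    show "integrable lborel (\<lambda>x. (cmod (T x))\<^sup>2)"
      by (rule integrable[of _ "B\<^sub>T\<^sup>2"])
         (use \<open>0 \<le> B\<^sub>T\<close> in \<open>auto simp: T_supp intro!: power_mono T_bound\<close>)
  qed (simp add: h_T T_T)
  finally show ?thesis unfolding \<sigma>_def a_def by simp
qed

section \<open>Summing geometrically decaying pieces in l^s\<close>

lemma powr_sum_le_weighted_sum_powr_pos:
  fixes x w :: "'a \<Rightarrow> real"
  assumes s: "s \<ge> 1" and A: "finite A" "A \<noteq> {}" and x: "\<And>j. j \<in> A \<Longrightarrow> 0 < x j"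
    and w: "\<And>j. j \<in> A \<Longrightarrow> 0 < w j" and w_sum: "(\<Sum>j\<in>A. w j) \<le> 1"
  shows "(\<Sum>j\<in>A. x j) powr s \<le> (\<Sum>j\<in>A. w j powr (1 - s) * x j powr s)"
proof -
  define W where "W = (\<Sum>j\<in>A. w j)"
  have "0 < W" unfolding W_def using A w by (intro sum_pos) auto
  have jensen: "(\<Sum>j\<in>A. (w j / W) *\<^sub>R (x j / w j)) powr s \<le> (\<Sum>j\<in>A. (w j / W) * (x j / w j) powr s)"
    by (rule convex_on_sum[OF A powr_convex[OF s]])
       (use \<open>0 < W\<close> x w in \<open>auto simp: W_def sum_divide_distrib[symmetric] intro!: less_imp_le\<close>)
  have "(w j / W) *\<^sub>R (x j / w j) = x j / W" if "j \<in> A" for j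
    using w[OF that] by simp
  then have "(\<Sum>j\<in>A. (w j / W) *\<^sub>R (x j / w j)) = (\<Sum>j\<in>A. x j) / W"
    by (simp add: sum_divide_distrib)
  then have "(\<Sum>j\<in>A. x j) powr s = W powr s * (\<Sum>j\<in>A. (w j / W) *\<^sub>R (x j / w j)) powr s"
    using \<open>0 < W\<close> by (simp add: powr_divide)
  also have "\<dots> \<le> W powr s * (\<Sum>j\<in>A. (w j / W) * (x j / w j) powr s)"
    using jensen by (intro mult_left_mono) auto
  also have "\<dots> = W powr (s - 1) * (\<Sum>j\<in>A. w j * (x j / w j) powr s)"
    using \<open>0 < W\<close> unfolding powr_diff
    by (simp add: sum_divide_distrib[symmetric] sum_distrib_left)
  also have "\<dots> \<le> (\<Sum>j\<in>A. w j * (x j / w j) powr s)"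
    using \<open>0 < W\<close> w_sum s w
    by (intro mult_left_le_one_le sum_nonneg mult_nonneg_nonneg powr_le1)
       (auto simp: W_def intro: less_imp_le)
  also have "\<dots> = (\<Sum>j\<in>A. w j powr (1 - s) * x j powr s)"
  proof (intro sum.cong refl)
    fix j assume "j \<in> A"
    then show "w j * (x j / w j) powr s = w j powr (1 - s) * x j powr s"
      using w[of j] unfolding powr_divide powr_diff by simp
  qed
  finally show ?thesis .
qed

lemma powr_sum_le_weighted_sum_powr:
  fixes x w :: "'a \<Rightarrow> real"
  assumes s: "s \<ge> 1" and A: "finite A" and x: "\<And>j. j \<in> A \<Longrightarrow> 0 \<le> x j"
    and w: "\<And>j. j \<in> A \<Longrightarrow> 0 < w j" and w_sum: "(\<Sum>j\<in>A. w j) \<le> 1"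
  shows "(\<Sum>j\<in>A. x j) powr s \<le> (\<Sum>j\<in>A. w j powr (1 - s) * x j powr s)"
proof -
  define A' where "A' = {j\<in>A. 0 < x j}"
  have A': "finite A'" "A' \<subseteq> A" using A by (auto simp: A'_def)
  have "(\<Sum>j\<in>A. x j) = (\<Sum>j\<in>A'. x j)"
    by (rule sum.mono_neutral_right) (use A x in \<open>force simp: A'_def\<close>)+
  moreover have "(\<Sum>j\<in>A'. x j) powr s \<le> (\<Sum>j\<in>A'. w j powr (1 - s) * x j powr s)"
  proof (cases "A' = {}")
    case False
    have "(\<Sum>j\<in>A'. w j) \<le> (\<Sum>j\<in>A. w j)"
      using w by (intro sum_mono2 A A') (auto intro: less_imp_le)
    then show ?thesis
      using s A' False w w_sum
      by (intro powr_sum_le_weighted_sum_powr_pos) (auto simp: A'_def)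
  qed simp
  moreover have "(\<Sum>j\<in>A'. w j powr (1 - s) * x j powr s) \<le> (\<Sum>j\<in>A. w j powr (1 - s) * x j powr s)"
    by (rule sum_mono2) (use A A' in auto)
  ultimately show ?thesis by simp
qed

lemma power_powr: "0 < x \<Longrightarrow> (x ^ n) powr a = (x powr a) ^ n" for x a :: real
  by (simp add: powr_realpow[symmetric] powr_powr powr_power mult.commute)

definition decay_sum_const :: "real \<Rightarrow> real \<Rightarrow> real" where
  "decay_sum_const s \<rho> = (1 - \<rho> powr (1 / (2 * (s - 1)))) powr (1 - s) / (1 - sqrt \<rho>)"

lemma decay_sum_const_nonneg: "\<rho> < 1 \<Longrightarrow> 0 \<le> decay_sum_const s \<rho>"
  by (simp add: decay_sum_const_def)

lemma geometric_weight_powr: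
  fixes s \<rho> :: real
  assumes s: "s > 1" and \<rho>: "0 < \<rho>" "\<rho> < 1"
  defines "\<theta> \<equiv> \<rho> powr (1 / (2 * (s - 1)))"
  shows "((1 - \<theta>) * \<theta> ^ j) powr (1 - s) * \<rho> ^ j = (1 - \<theta>) powr (1 - s) * sqrt \<rho> ^ j"
proof -
  have "0 < \<theta>" using \<rho> by (simp add: \<theta>_def)
  have "1 / (2 * (s - 1)) * (1 - s) = - 1/2"
    using s by (simp add: field_simps)
  then have "\<theta> powr (1 - s) = \<rho> powr (- 1/2)"
    by (simp add: \<theta>_def powr_powr)
  then have "\<theta> powr (1 - s) * \<rho> = sqrt \<rho>"
    using \<rho> by (simp add: powr_minus_divide powr_half_sqrt real_div_sqrt)
  then show ?thesis
    unfolding powr_mult power_powr[OF \<open>0 < \<theta>\<close>]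
    by (simp add: mult.assoc power_mult_distrib[symmetric])
qed

lemma sum_powr_sum_le_of_geometric_decay:
  fixes b :: "nat \<Rightarrow> 'a \<Rightarrow> real"
  assumes s: "s > 1" and N: "finite N" and b: "\<And>j q. 0 \<le> b j q"
    and \<rho>: "0 < \<rho>" "\<rho> < 1"
    and decay: "\<And>j. (\<Sum>q\<in>N. b j q powr s) \<le> A * \<rho> ^ j"
  shows "(\<Sum>q\<in>N. (\<Sum>j<J. b j q) powr s)
           \<le> decay_sum_const s \<rho> * A"
proof -
  define \<theta> where "\<theta> = \<rho> powr (1 / (2 * (s - 1)))"
  have \<theta>: "0 < \<theta>" "\<theta> < 1" using \<rho> s by (auto simp: \<theta>_def powr01_less_one)
  \<comment> \<open>weights with total mass at most 1 for which \<open>w j powr (1 - s) * \<rho> ^ j\<close> still decays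
      geometrically, with ratio \<open>sqrt \<rho>\<close>\<close>
  define w where "w j = (1 - \<theta>) * \<theta> ^ j" for j
  have w_pos: "0 < w j" for j using \<theta> by (simp add: w_def)
  have w_sum: "(\<Sum>j<J. w j) \<le> 1"
    using \<theta> by (simp add: w_def sum_distrib_left[symmetric] one_diff_power_eq[symmetric])
  have w_decay: "w j powr (1 - s) * \<rho> ^ j = (1 - \<theta>) powr (1 - s) * sqrt \<rho> ^ j" for j
    unfolding w_def \<theta>_def using s \<rho> by (rule geometric_weight_powr)
  have "0 \<le> (\<Sum>q\<in>N. b 0 q powr s)" by (simp add: sum_nonneg)
  then have "0 \<le> A" using decay[of 0] by simp
  have "(\<Sum>q\<in>N. (\<Sum>j<J. b j q) powr s) \<le> (\<Sum>q\<in>N. \<Sum>j<J. w j powr (1 - s) * b j q powr s)"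
    using s b w_pos w_sum by (intro sum_mono powr_sum_le_weighted_sum_powr) auto
  also have "\<dots> = (\<Sum>j<J. w j powr (1 - s) * (\<Sum>q\<in>N. b j q powr s))"
    by (subst sum.swap) (simp add: sum_distrib_left)
  also have "\<dots> \<le> (\<Sum>j<J. w j powr (1 - s) * (A * \<rho> ^ j))"
    by (intro sum_mono mult_left_mono decay) simp
  also have "\<dots> = (\<Sum>j<J. A * (w j powr (1 - s) * \<rho> ^ j))"
    by (simp only: ac_simps)
  also have "\<dots> = (1 - \<theta>) powr (1 - s) * A * (\<Sum>j<J. sqrt \<rho> ^ j)"
    unfolding w_decay by (simp add: sum_distrib_left sum_distrib_right ac_simps)
  also have "\<dots> \<le> (1 - \<theta>) powr (1 - s) * A * (1 / (1 - sqrt \<rho>))"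
    using \<rho> \<open>0 \<le> A\<close> sum_le_suminf[OF summable_geometric, of "sqrt \<rho>" "{..<J}"]
    by (intro mult_left_mono) (simp_all add: suminf_geometric)
  finally show ?thesis
    by (simp add: \<theta>_def decay_sum_const_def)
qed

section \<open>Step functions on the integer lattice\<close>

lemma nn_integral_count_space_le_of_finite_sums:
  fixes G :: "'a::countable \<Rightarrow> ennreal"
  assumes bound: "\<And>F. finite F \<Longrightarrow> (\<Sum>q\<in>F. G q) \<le> B"
  shows "(\<integral>\<^sup>+q. G q \<partial>count_space UNIV) \<le> B"
proof (cases "finite (UNIV :: 'a set)")
  case True
  then show ?thesis by (simp add: nn_integral_count_space_finite bound)
next
  case False
  define e where "e = from_nat_into (UNIV :: 'a set)"
  have e: "bij e" unfolding e_def by (rule bij_betw_from_nat_into[OF countableI_type False])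
  have "(\<integral>\<^sup>+q. G q \<partial>count_space UNIV) = (\<Sum>n. G (e n))"
    by (simp add: nn_integral_bij_count_space[OF e, symmetric] nn_integral_count_space_nat)
  also have "\<dots> \<le> B"
    unfolding suminf_eq_SUP
  proof (rule SUP_least)
    fix K
    have "(\<Sum>n<K. G (e n)) = (\<Sum>q\<in>e ` {..<K}. G q)"
      by (subst sum.reindex) (auto intro: inj_on_subset[OF bij_is_inj[OF e]])
    then show "(\<Sum>n<K. G (e n)) \<le> B" by (simp add: bound)
  qed
  finally show ?thesis .
qed

lemma nn_integral_lborel_floor_pair:
  fixes G :: "int \<times> int \<Rightarrow> ennreal"
  shows "(\<integral>\<^sup>+z. G (\<lfloor>fst z\<rfloor>, \<lfloor>snd z\<rfloor>) \<partial>(lborel :: (real \<times> real) measure))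
           = (\<integral>\<^sup>+q. G q \<partial>count_space UNIV)"
proof -
  define cell :: "int \<times> int \<Rightarrow> (real \<times> real) set" where
    "cell q = {of_int (fst q)..<of_int (fst q) + 1} \<times> {of_int (snd q)..<of_int (snd q) + 1}" for q
  have cell_iff: "z \<in> cell q \<longleftrightarrow> q = (\<lfloor>fst z\<rfloor>, \<lfloor>snd z\<rfloor>)" for z q
    by (cases z; cases q) (auto simp: cell_def floor_eq_iff intro: floor_unique[symmetric])
  have cell_sets [measurable]: "cell q \<in> sets (lborel \<Otimes>\<^sub>M lborel)" for q
    unfolding cell_def by (intro pair_measureI) auto
  have "G (\<lfloor>fst z\<rfloor>, \<lfloor>snd z\<rfloor>) = (\<integral>\<^sup>+q. G q * indicator (cell q) z \<partial>count_space UNIV)" for z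
    by (subst nn_integral_count_space'[of "{(\<lfloor>fst z\<rfloor>, \<lfloor>snd z\<rfloor>)}"]) (auto simp: cell_iff)
  then have "(\<integral>\<^sup>+z. G (\<lfloor>fst z\<rfloor>, \<lfloor>snd z\<rfloor>) \<partial>(lborel :: (real \<times> real) measure))
      = (\<integral>\<^sup>+z. \<integral>\<^sup>+q. G q * indicator (cell q) z \<partial>count_space UNIV \<partial>(lborel \<Otimes>\<^sub>M lborel))"
    by (simp add: lborel_prod)
  also have "\<dots> = (\<integral>\<^sup>+q. \<integral>\<^sup>+z. G q * indicator (cell q) z \<partial>(lborel \<Otimes>\<^sub>M lborel) \<partial>count_space UNIV)"
    by (rule nn_integral_count_space_nn_integral) auto
  also have "\<dots> = (\<integral>\<^sup>+q. G q \<partial>count_space UNIV)"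
    by (simp add: nn_integral_cmult_indicator cell_def lborel.emeasure_pair_measure_Times)
  finally show ?thesis .
qed

section \<open>Correlations of a bounded function on [0, 1]\<close>

definition chirp_coeff :: "(real \<Rightarrow> complex) \<Rightarrow> int \<Rightarrow> int \<Rightarrow> complex" where
  "chirp_coeff f n m = (LINT x|lborel. f x * cis2pi (- (of_int n * x + of_int m * x\<^sup>2)))"

definition dyadic_Ioc :: "nat \<Rightarrow> real set" where
  "dyadic_Ioc j = {(1/2) ^ Suc j<..(1/2) ^ j}"

lemma dyadic_Ioc_bounds:
  assumes "u \<in> dyadic_Ioc j"
  shows "0 < u" "u \<le> 1" "1 < 2 * u * 2 ^ j"
proof -
  have u: "1 / (2 * 2 ^ j) < u" "u \<le> (1/2) ^ j"
    using assms by (auto simp: dyadic_Ioc_def power_one_over)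
  moreover have "0 < 1 / (2 * 2 ^ j :: real)" by simp
  ultimately show "0 < u" by linarith
  show "u \<le> 1" using u(2) power_le_one[of "1/2::real" j] by simp
  show "1 < 2 * u * 2 ^ j" using u(1) by (simp add: field_simps)
qed

locale bounded_on_01 =
  fixes f :: "real \<Rightarrow> complex" and M :: real
  assumes f_measurable [measurable]: "f \<in> borel_measurable borel"
    and norm_f_le: "\<And>x. cmod (f x) \<le> M"
    and f_eq_0_outside: "\<And>x. x \<notin> {0..1} \<Longrightarrow> f x = 0"
begin

lemma bound_nonneg: "0 \<le> M"
  using norm_f_le[of 0] norm_ge_zero order_trans by blast

definition norm_pow_integral :: "nat \<Rightarrow> real" where
  "norm_pow_integral k = (LINT x|lborel. cmod (f x) ^ k)"

lemma norm_pow_integral_nonneg: "0 \<le> norm_pow_integral k"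
  by (simp add: norm_pow_integral_def)

lemma integrable_norm_pow: "k > 0 \<Longrightarrow> integrable lborel (\<lambda>x. cmod (f x) ^ k)"
  by (rule integrable_bounded_vanishing_outside_Icc[where B="M ^ k" and a=0 and b=1])
     (auto simp: f_eq_0_outside power_mono norm_f_le)

lemma integral_norm_pow_shift_product_le:
  assumes "k > 0"
  shows "(LINT x|lborel. cmod (f (x + u)) ^ k * cmod (f x) ^ k) \<le> norm_pow_integral (2 * k)"
proof -
  have shifted: "integrable lborel (\<lambda>x. cmod (f (x + u)) ^ (2 * k))"
    using lborel_integrable_real_affine[OF integrable_norm_pow, of "2 * k" 1 u] assms
    by (simp add: add.commute)
  have "(LINT x|lborel. cmod (f (x + u)) ^ k * cmod (f x) ^ k)
        \<le> (LINT x|lborel. (cmod (f (x + u)) ^ (2 * k) + cmod (f x) ^ (2 * k)) / 2)"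
  proof (rule integral_mono)
    show "integrable lborel (\<lambda>x. cmod (f (x + u)) ^ k * cmod (f x) ^ k)"
      by (rule integrable_bounded_vanishing_outside_Icc[where B="M ^ k * M ^ k" and a=0 and b=1])
         (use assms bound_nonneg in \<open>auto simp: f_eq_0_outside intro!: mult_mono power_mono norm_f_le\<close>)
    show "integrable lborel (\<lambda>x. (cmod (f (x + u)) ^ (2 * k) + cmod (f x) ^ (2 * k)) / 2)"
      using assms shifted by (intro integrable_divide Bochner_Integration.integrable_add
          integrable_norm_pow) auto
    show "cmod (f (x + u)) ^ k * cmod (f x) ^ k
          \<le> (cmod (f (x + u)) ^ (2 * k) + cmod (f x) ^ (2 * k)) / 2" for x
      using sum_squares_bound[of "cmod (f (x + u)) ^ k" "cmod (f x) ^ k"]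
      by (simp add: power_mult power2_eq_square[symmetric] mult.commute[of 2 k])
  qed
  also have "\<dots> = norm_pow_integral (2 * k)"
    using assms shifted lborel_integral_shift[of "\<lambda>x. cmod (f x) ^ (2 * k)" u]
    by (simp add: norm_pow_integral_def integrable_norm_pow)
  finally show ?thesis .
qed

lemma norm_pow_integral_2_le_am_gm:
  assumes "t > 0"
  shows "norm_pow_integral 2 \<le> (norm_pow_integral 4 / t + t) / 2"
proof -
  have "norm_pow_integral 2 \<le> (LINT x|lborel. (cmod (f x) ^ 4 / t + t * indicator {0..1} x) / 2)"
    unfolding norm_pow_integral_def
  proof (rule integral_mono)
    show "integrable lborel (\<lambda>x. (cmod (f x))\<^sup>2)" by (rule integrable_norm_pow) simp
    show "integrable lborel (\<lambda>x. (cmod (f x) ^ 4 / t + t * indicator {0..1} x) / 2)"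
      by (intro integrable_divide Bochner_Integration.integrable_add integrable_norm_pow
          integrable_mult_right) auto
    show "(cmod (f x))\<^sup>2 \<le> (cmod (f x) ^ 4 / t + t * indicator {0..1} x) / 2" for x
    proof (cases "x \<in> {0..1}")
      case True
      have "2 * (cmod (f x))\<^sup>2 * t \<le> ((cmod (f x))\<^sup>2)\<^sup>2 + t\<^sup>2"
        by (rule sum_squares_bound)
      then have "(cmod (f x))\<^sup>2 \<le> (((cmod (f x))\<^sup>2)\<^sup>2 / t + t) / 2"
        using assms by (simp add: field_simps power2_eq_square)
      then show ?thesis
        using True by (simp flip: power_mult)
    qed (simp add: f_eq_0_outside)
  qed
  also have "\<dots> = (norm_pow_integral 4 / t + t) / 2"
    by (simp add: norm_pow_integral_def integrable_norm_pow)
  finally show ?thesis .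
qed

lemma norm_pow_integral_2_le: "norm_pow_integral 2 \<le> sqrt (norm_pow_integral 4)"
proof (cases "norm_pow_integral 4 = 0")
  case True
  then have "norm_pow_integral 2 \<le> 0 + e" if "e > 0" for e
    using norm_pow_integral_2_le_am_gm[of "2 * e"] that by simp
  then have "norm_pow_integral 2 \<le> 0" by (rule field_le_epsilon)
  then show ?thesis using True by simp
next
  case False
  then have "0 < norm_pow_integral 4" using norm_pow_integral_nonneg[of 4] by simp
  then have "norm_pow_integral 2 \<le> (norm_pow_integral 4 / sqrt (norm_pow_integral 4)
                                    + sqrt (norm_pow_integral 4)) / 2"
    using norm_pow_integral_2_le_am_gm[of "sqrt (norm_pow_integral 4)"] by simp
  also have "\<dots> = sqrt (norm_pow_integral 4)"
    using \<open>0 < norm_pow_integral 4\<close> by (simp add: real_div_sqrt)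
  finally show ?thesis .
qed

definition chirp_corr :: "int \<Rightarrow> real \<Rightarrow> complex" where
  "chirp_corr m u = (LINT \<eta>|lborel. f (\<eta> + u) * cnj (f \<eta>) * cis2pi (- (of_int m * u * (2 * \<eta> + u))))"

definition twisted_corr :: "int \<Rightarrow> int \<Rightarrow> real \<Rightarrow> complex" where
  "twisted_corr n m u = cis2pi (- (of_int n * u)) * chirp_corr m u"

lemma borel_measurable_chirp_corr [measurable]: "chirp_corr m \<in> borel_measurable lborel"
  unfolding chirp_corr_def by measurable

lemma borel_measurable_twisted_corr [measurable]: "twisted_corr n m \<in> borel_measurable lborel"
  unfolding twisted_corr_def by measurable

lemma norm_chirp_corr_le: "cmod (chirp_corr m u) \<le> norm_pow_integral 2"
proof -
  have "cmod (chirp_corr m u)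
        \<le> (LINT \<eta>|lborel. cmod (f (\<eta> + u) * cnj (f \<eta>) * cis2pi (- (of_int m * u * (2 * \<eta> + u)))))"
    unfolding chirp_corr_def by (rule integral_norm_bound)
  also have "\<dots> = (LINT \<eta>|lborel. cmod (f (\<eta> + u)) ^ 1 * cmod (f \<eta>) ^ 1)"
    by (simp add: norm_mult)
  also have "\<dots> \<le> norm_pow_integral 2"
    using integral_norm_pow_shift_product_le[of 1 u] by simp
  finally show ?thesis .
qed

lemma norm_twisted_corr_le: "cmod (twisted_corr n m u) \<le> norm_pow_integral 2"
  by (simp add: twisted_corr_def norm_mult norm_chirp_corr_le)

lemma chirp_corr_eq_0: "1 < \<bar>u\<bar> \<Longrightarrow> chirp_corr m u = 0"
proof -
  assume u: "1 < \<bar>u\<bar>"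
  have vanish: "f (\<eta> + u) * cnj (f \<eta>) = 0" for \<eta>
    using f_eq_0_outside[of \<eta>] f_eq_0_outside[of "\<eta> + u"] u by force
  show ?thesis unfolding chirp_corr_def vanish by simp
qed

lemma chirp_corr_uminus: "chirp_corr m (- u) = cnj (chirp_corr m u)"
proof -
  have "chirp_corr m (- u)
        = (LINT \<eta>|lborel. f \<eta> * cnj (f (\<eta> + u)) * cis2pi (of_int m * u * (2 * \<eta> + u)))"
    unfolding chirp_corr_def
    by (subst lborel_integral_shift[symmetric, of _ u]) (simp add: algebra_simps)
  also have "\<dots> = (LINT \<eta>|lborel.
                      cnj (f (\<eta> + u) * cnj (f \<eta>) * cis2pi (- (of_int m * u * (2 * \<eta> + u)))))"
    by (intro Bochner_Integration.integral_cong refl) (simp add: cnj_cis2pi)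
  also have "\<dots> = cnj (chirp_corr m u)"
    unfolding chirp_corr_def by (rule Bochner_Integration.integral_cnj)
  finally show ?thesis .
qed

lemma integrable_twisted_corr:
  assumes "g \<in> borel_measurable lborel" "\<And>u. cmod (g u) \<le> 1"
  shows "integrable lborel (\<lambda>u. g u * twisted_corr n m u)"
proof (rule integrable_bounded_vanishing_outside_Icc[where B="norm_pow_integral 2" and a="-1" and b=1])
  show "(\<lambda>u. g u * twisted_corr n m u) \<in> borel_measurable lborel"
    using assms(1) by measurable
  show "cmod (g u * twisted_corr n m u) \<le> norm_pow_integral 2" for u
    using mult_mono[OF assms(2) norm_twisted_corr_le] by (simp add: norm_mult norm_pow_integral_nonneg)
  show "u \<notin> {- 1..1} \<Longrightarrow> g u * twisted_corr n m u = 0" for u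
    using chirp_corr_eq_0[of u m] by (auto simp: twisted_corr_def)
qed

definition corr_integrand :: "int \<Rightarrow> int \<Rightarrow> real \<Rightarrow> real \<Rightarrow> complex" where
  "corr_integrand n m \<eta> u =
     f (\<eta> + u) * cnj (f \<eta>) * cis2pi (- (of_int n * u + of_int m * u * (2 * \<eta> + u)))"

lemma integrable_corr_integrand:
  "integrable (lborel \<Otimes>\<^sub>M lborel) (\<lambda>(\<eta>, u). corr_integrand n m \<eta> u)"
proof (rule integrableI_bounded_set[where A="{0..1} \<times> {-1..1}" and B="M * M"])
  show "(\<lambda>(\<eta>, u). corr_integrand n m \<eta> u) \<in> borel_measurable (lborel \<Otimes>\<^sub>M lborel)"
    unfolding corr_integrand_def by measurable
  show "{0..1::real} \<times> {-1..1::real} \<in> sets (lborel \<Otimes>\<^sub>M lborel)"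
    by (intro pair_measureI) simp_all
  show "emeasure (lborel \<Otimes>\<^sub>M lborel) ({0..1::real} \<times> {-1..1::real}) < \<infinity>"
    by (simp add: lborel.emeasure_pair_measure_Times ennreal_mult_less_top)
  show "AE z in lborel \<Otimes>\<^sub>M lborel.
          z \<in> {0..1} \<times> {-1..1} \<longrightarrow> cmod (case z of (\<eta>, u) \<Rightarrow> corr_integrand n m \<eta> u) \<le> M * M"
    by (intro AE_I2) (auto simp: corr_integrand_def norm_mult intro!: mult_mono norm_f_le bound_nonneg)
  show "AE z in lborel \<Otimes>\<^sub>M lborel.
          z \<notin> {0..1} \<times> {-1..1} \<longrightarrow> (case z of (\<eta>, u) \<Rightarrow> corr_integrand n m \<eta> u) = 0"
  proof (intro AE_I2 impI)
    fix z :: "real \<times> real"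
    assume "z \<notin> {0..1} \<times> {-1..1}"
    then show "(case z of (\<eta>, u) \<Rightarrow> corr_integrand n m \<eta> u) = 0"
      using f_eq_0_outside[of "fst z"] f_eq_0_outside[of "fst z + snd z"]
      by (cases z) (force simp: corr_integrand_def)
  qed
qed

lemma integral_corr_integrand: "(LINT \<eta>|lborel. corr_integrand n m \<eta> u) = twisted_corr n m u"
proof -
  have "corr_integrand n m \<eta> u = cis2pi (- (of_int n * u)) *
          (f (\<eta> + u) * cnj (f \<eta>) * cis2pi (- (of_int m * u * (2 * \<eta> + u))))" for \<eta>
    unfolding corr_integrand_def minus_add_distrib cis2pi_add by (simp only: mult_ac)
  then show ?thesis
    by (simp add: twisted_corr_def chirp_corr_def)
qed

text \<open>Substituting \<open>\<xi> = \<eta> + u\<close> in the integral defining the coefficient turns the phase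
  difference \<open>n\<xi> + m\<xi>\<^sup>2 - (n\<eta> + m\<eta>\<^sup>2)\<close> into \<open>nu + mu(2\<eta> + u)\<close>.\<close>

lemma chirp_coeff_mult_cnj:
  "chirp_coeff f n m * cnj (f \<eta> * cis2pi (- (of_int n * \<eta> + of_int m * \<eta>\<^sup>2)))
   = (LINT u|lborel. corr_integrand n m \<eta> u)"
proof -
  have "chirp_coeff f n m * cnj (f \<eta> * cis2pi (- (of_int n * \<eta> + of_int m * \<eta>\<^sup>2)))
        = (LINT \<xi>|lborel. f \<xi> * cis2pi (- (of_int n * \<xi> + of_int m * \<xi>\<^sup>2))
                          * cnj (f \<eta> * cis2pi (- (of_int n * \<eta> + of_int m * \<eta>\<^sup>2))))"
    unfolding chirp_coeff_def by (rule integral_mult_left_zero[symmetric])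
  also have "\<dots> = (LINT u|lborel. f (u + \<eta>) * cis2pi (- (of_int n * (u + \<eta>) + of_int m * (u + \<eta>)\<^sup>2))
                          * cnj (f \<eta> * cis2pi (- (of_int n * \<eta> + of_int m * \<eta>\<^sup>2))))"
    by (rule lborel_integral_shift[symmetric])
  also have "\<dots> = (LINT u|lborel. corr_integrand n m \<eta> u)"
  proof (intro Bochner_Integration.integral_cong refl)
    fix u
    have "cis2pi (- (of_int n * (u + \<eta>) + of_int m * (u + \<eta>)\<^sup>2)) * cis2pi (of_int n * \<eta> + of_int m * \<eta>\<^sup>2)
          = cis2pi (- (of_int n * u + of_int m * u * (2 * \<eta> + u)))"
      unfolding cis2pi_add[symmetric] by (simp add: power2_eq_square algebra_simps)
    then show "f (u + \<eta>) * cis2pi (- (of_int n * (u + \<eta>) + of_int m * (u + \<eta>)\<^sup>2))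
                 * cnj (f \<eta> * cis2pi (- (of_int n * \<eta> + of_int m * \<eta>\<^sup>2))) = corr_integrand n m \<eta> u"
      unfolding corr_integrand_def by (simp add: cnj_cis2pi add.commute mult_ac)
  qed
  finally show ?thesis .
qed

lemma norm_chirp_coeff_square:
  "of_real ((cmod (chirp_coeff f n m))\<^sup>2) = (LINT u|lborel. twisted_corr n m u)"
proof -
  have "of_real ((cmod (chirp_coeff f n m))\<^sup>2)
        = chirp_coeff f n m * (LINT \<eta>|lborel. cnj (f \<eta> * cis2pi (- (of_int n * \<eta> + of_int m * \<eta>\<^sup>2))))"
    unfolding complex_norm_square Bochner_Integration.integral_cnj
    by (simp only: chirp_coeff_def)
  also have "\<dots> = (LINT \<eta>|lborel. chirp_coeff f n m * cnj (f \<eta> * cis2pi (- (of_int n * \<eta> + of_int m * \<eta>\<^sup>2))))"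
    by (rule integral_mult_right_zero[symmetric])
  also have "\<dots> = (LINT \<eta>|lborel. LINT u|lborel. corr_integrand n m \<eta> u)"
    unfolding chirp_coeff_mult_cnj ..
  also have "\<dots> = (LINT u|lborel. LINT \<eta>|lborel. corr_integrand n m \<eta> u)"
    using lborel_pair.Fubini_integral[OF integrable_corr_integrand] by simp
  finally show ?thesis
    unfolding integral_corr_integrand .
qed

definition half_corr :: "int \<Rightarrow> int \<Rightarrow> complex" where
  "half_corr n m = (LINT u|lborel. indicator {0<..} u * twisted_corr n m u)"

lemma norm_chirp_coeff_square_eq: "(cmod (chirp_coeff f n m))\<^sup>2 = 2 * Re (half_corr n m)"
proof -
  have "(LINT u|lborel. twisted_corr n m u)
        = (LINT u|lborel. indicator {0<..} u * twisted_corr n m u + indicator {..<0} u * twisted_corr n m u)"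
  proof (rule integral_cong_AE)
    show "AE u in lborel. twisted_corr n m u
            = indicator {0<..} u * twisted_corr n m u + indicator {..<0} u * twisted_corr n m u"
      using AE_lborel_singleton[of 0] by eventually_elim (auto simp: indicator_def)
  qed measurable
  also have "\<dots> = half_corr n m + (LINT u|lborel. indicator {..<0} u * twisted_corr n m u)"
    unfolding half_corr_def
    by (intro Bochner_Integration.integral_add integrable_twisted_corr) (auto simp: indicator_def)
  also have "(LINT u|lborel. indicator {..<0} u * twisted_corr n m u)
             = (LINT u|lborel. indicator {..<0} (- u) * twisted_corr n m (- u))"
    by (rule lborel_integral_reflect[symmetric])
  also have "\<dots> = (LINT u|lborel. cnj (indicator {0<..} u * twisted_corr n m u))"
    by (intro Bochner_Integration.integral_cong refl)
       (auto simp: twisted_corr_def chirp_corr_uminus cnj_cis2pi indicator_def)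
  also have "\<dots> = cnj (half_corr n m)"
    unfolding half_corr_def by (rule Bochner_Integration.integral_cnj)
  finally have "of_real ((cmod (chirp_coeff f n m))\<^sup>2) = half_corr n m + cnj (half_corr n m)"
    unfolding norm_chirp_coeff_square .
  also have "\<dots> = of_real (2 * Re (half_corr n m))"
    by (simp add: complex_add_cnj)
  finally show ?thesis
    by (rule of_real_eq_iff[THEN iffD1])
qed

definition dyadic_corr :: "int \<Rightarrow> int \<Rightarrow> nat \<Rightarrow> complex" where
  "dyadic_corr n m j = (LINT u|lborel. indicator (dyadic_Ioc j) u * twisted_corr n m u)"

lemma norm_integral_Ioc_twisted_corr_le:
  assumes "a \<le> b"
  shows "cmod (LINT u|lborel. indicator {a<..b} u * twisted_corr n m u) \<le> (b - a) * norm_pow_integral 2"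
proof -
  have "cmod (LINT u|lborel. indicator {a<..b} u * twisted_corr n m u)
        \<le> (LINT u|lborel. cmod (indicator {a<..b} u * twisted_corr n m u))"
    by (rule integral_norm_bound)
  also have "\<dots> \<le> (LINT u|lborel. indicator {a<..b} u * norm_pow_integral 2)"
  proof (rule integral_mono)
    show "integrable lborel (\<lambda>u. cmod (indicator {a<..b} u * twisted_corr n m u))"
      by (intro integrable_norm integrable_twisted_corr) (auto simp: indicator_def)
    show "integrable lborel (\<lambda>u. indicator {a<..b} u * norm_pow_integral 2)"
      using assms by (intro integrable_mult_left integrable_real_indicator) auto
    show "cmod (indicator {a<..b} u * twisted_corr n m u) \<le> indicator {a<..b} u * norm_pow_integral 2"
      for u by (auto simp: indicator_def norm_twisted_corr_le)
  qed
  also have "\<dots> = (b - a) * norm_pow_integral 2"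
    using assms by simp
  finally show ?thesis .
qed

lemma norm_dyadic_corr_le: "cmod (dyadic_corr n m j) \<le> (1/2) ^ Suc j * norm_pow_integral 2"
  using norm_integral_Ioc_twisted_corr_le[of "(1/2) ^ Suc j" "(1/2) ^ j" n m]
  by (simp add: dyadic_corr_def dyadic_Ioc_def)

lemma half_corr_eq_partial_sum:
  "half_corr n m = (\<Sum>j<J. dyadic_corr n m j)
                   + (LINT u|lborel. indicator {0<..(1/2) ^ J} u * twisted_corr n m u)"
proof (induction J)
  case 0
  have vanish: "indicator {0<..} u * twisted_corr n m u = indicator {0<..1} u * twisted_corr n m u"
    for u :: real
    using chirp_corr_eq_0[of u m] by (auto simp: indicator_def twisted_corr_def)
  show ?case unfolding half_corr_def vanish by simp
next
  case (Suc J)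
  have "(0::real) < (1/2) ^ Suc J" "(1/2::real) ^ Suc J < (1/2) ^ J" by simp_all
  then have split: "(indicator {0<..(1/2::real) ^ J} u :: complex)
                    = indicator (dyadic_Ioc J) u + indicator {0<..(1/2::real) ^ Suc J} u" for u :: real
    unfolding dyadic_Ioc_def indicator_def by auto
  have "(LINT u|lborel. indicator {0<..(1/2::real) ^ J} u * twisted_corr n m u)
        = (LINT u|lborel. indicator (dyadic_Ioc J) u * twisted_corr n m u
                          + indicator {0<..(1/2::real) ^ Suc J} u * twisted_corr n m u)"
    unfolding split distrib_right ..
  also have "\<dots> = dyadic_corr n m J
               + (LINT u|lborel. indicator {0<..(1/2::real) ^ Suc J} u * twisted_corr n m u)"
    unfolding dyadic_corr_def
    by (intro Bochner_Integration.integral_add integrable_twisted_corr)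
       (auto simp: indicator_def dyadic_Ioc_def)
  finally show ?case using Suc.IH by simp
qed

lemma dyadic_corr_sums: "dyadic_corr n m sums half_corr n m"
proof -
  define R where "R J = (LINT u|lborel. indicator {0<..(1/2::real) ^ J} u * twisted_corr n m u)" for J
  have "R \<longlonglongrightarrow> 0"
  proof (rule tendsto_norm_zero_cancel, rule Lim_null_comparison)
    show "\<forall>\<^sub>F J in sequentially. norm (norm (R J)) \<le> (1/2) ^ J * norm_pow_integral 2"
      using norm_integral_Ioc_twisted_corr_le[of 0 "(1/2) ^ J" n m for J] by (auto simp: R_def)
    show "(\<lambda>J. (1/2::real) ^ J * norm_pow_integral 2) \<longlonglongrightarrow> 0"
      by (intro tendsto_mult_left_zero LIMSEQ_power_zero) auto
  qed
  then have "(\<lambda>J. half_corr n m - R J) \<longlonglongrightarrow> half_corr n m"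
    using tendsto_diff[OF tendsto_const] by fastforce
  moreover have "(\<Sum>j<J. dyadic_corr n m j) = half_corr n m - R J" for J
    using half_corr_eq_partial_sum[of n m J] by (simp add: R_def)
  ultimately show ?thesis
    unfolding sums_def by simp
qed

lemma shifted_product_eq_0:
  assumes "0 < u" "\<eta> \<notin> {0..1/(2*u)}"
  shows "f (\<eta> + u) * cnj (f \<eta>) = 0"
proof (cases "\<eta> \<in> {0..1}")
  case True
  have "0 < u * u + (1 - u) * (1 - u)"
    using assms(1) by (intro add_pos_nonneg) auto
  then have "1 < 1/(2*u) + u" using assms(1) by (simp add: field_simps algebra_simps)
  then have "\<eta> + u \<notin> {0..1}" using True assms(2) by auto
  then show ?thesis by (simp add: f_eq_0_outside)
qed (simp add: f_eq_0_outside)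

text \<open>Up to a unimodular factor, \<open>chirp_corr m u\<close> is the Fourier coefficient at frequency \<open>2mu\<close>
  of \<open>\<eta> \<mapsto> f (\<eta> + u) * cnj (f \<eta>)\<close>, which lives on an interval of length \<open>1/(2u)\<close>.\<close>

lemma sum_norm_chirp_corr_square_le:
  assumes u: "0 < u" and N: "finite N"
  shows "2 * u * (\<Sum>m\<in>N. (cmod (chirp_corr m u))\<^sup>2) \<le> norm_pow_integral 4"
proof -
  define h where "h \<eta> = f (\<eta> + u) * cnj (f \<eta>)" for \<eta>
  have [measurable]: "h \<in> borel_measurable lborel"
    unfolding h_def by measurable
  have h_bound: "norm (h \<eta>) \<le> M * M" for \<eta>
    unfolding h_def norm_mult by (auto intro!: mult_mono norm_f_le bound_nonneg)
  have h_supp: "\<eta> \<notin> {0..0 + 1/(2*u)} \<Longrightarrow> h \<eta> = 0" for \<eta>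
    unfolding h_def using u by (simp add: shifted_product_eq_0)
  have "cmod (chirp_corr m u) = cmod (LINT \<eta>|lborel. h \<eta> * cis2pi (- (of_int m * (2 * u) * \<eta>)))"
    for m :: int
  proof -
    have "chirp_corr m u
          = cis2pi (- (of_int m * u\<^sup>2)) * (LINT \<eta>|lborel. h \<eta> * cis2pi (- (of_int m * (2 * u) * \<eta>)))"
      unfolding chirp_corr_def h_def integral_mult_right_zero[symmetric]
      by (intro Bochner_Integration.integral_cong refl)
         (simp add: cis2pi_add[symmetric] power2_eq_square algebra_simps)
    then show ?thesis by (simp add: norm_mult)
  qed
  then have "2 * u * (\<Sum>m\<in>N. (cmod (chirp_corr m u))\<^sup>2) \<le> (LINT \<eta>|lborel. (cmod (h \<eta>))\<^sup>2)"
    using bessel_inequality[of "2 * u" N h "M * M" 0] u N h_bound h_supp by simp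
  also have "\<dots> = (LINT \<eta>|lborel. cmod (f (\<eta> + u)) ^ 2 * cmod (f \<eta>) ^ 2)"
    by (simp add: h_def norm_mult power_mult_distrib)
  also have "\<dots> \<le> norm_pow_integral 4"
    using integral_norm_pow_shift_product_le[of 2 u] by simp
  finally show ?thesis .
qed

lemma sum_norm_chirp_corr_square_le_dyadic:
  assumes u: "u \<in> dyadic_Ioc j" and N: "finite N"
  shows "(\<Sum>m\<in>N. (cmod (chirp_corr m u))\<^sup>2) \<le> 2 ^ j * norm_pow_integral 4"
proof -
  define S where "S = (\<Sum>m\<in>N. (cmod (chirp_corr m u))\<^sup>2)"
  have "0 \<le> S" by (simp add: S_def sum_nonneg)
  have "S \<le> 2 ^ j * (2 * u * S)"
    using dyadic_Ioc_bounds(3)[OF u] mult_right_mono[of 1 "2 * u * 2 ^ j" S] \<open>0 \<le> S\<close>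
    by (simp add: mult_ac)
  also have "\<dots> \<le> 2 ^ j * norm_pow_integral 4"
    using sum_norm_chirp_corr_square_le[OF dyadic_Ioc_bounds(1)[OF u] N]
    by (intro mult_left_mono) (simp_all add: S_def)
  finally show ?thesis unfolding S_def .
qed

lemma sum_norm_dyadic_corr_square_le_chirp_corr:
  assumes "finite N"
  shows "(\<Sum>n\<in>N. (cmod (dyadic_corr n m j))\<^sup>2)
           \<le> (LINT u|lborel. indicator (dyadic_Ioc j) u * (cmod (chirp_corr m u))\<^sup>2)"
proof -
  define h where "h u = indicator (dyadic_Ioc j) u * chirp_corr m u" for u
  have [measurable]: "h \<in> borel_measurable lborel"
    unfolding h_def dyadic_Ioc_def by measurable
  have "norm (h u) \<le> norm_pow_integral 2" for u
    by (auto simp: h_def indicator_def norm_chirp_corr_le norm_pow_integral_nonneg)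
  moreover have "h u = 0" if "u \<notin> {0..0 + 1/1}" for u
    using that dyadic_Ioc_bounds[of u j] by (auto simp: h_def indicator_def)
  ultimately have "(\<Sum>n\<in>N. (cmod (LINT u|lborel. h u * cis2pi (- (of_int n * 1 * u))))\<^sup>2)
                   \<le> (LINT u|lborel. (cmod (h u))\<^sup>2)"
    using bessel_inequality[of 1 N h "norm_pow_integral 2" 0] assms by simp
  moreover have "dyadic_corr n m j = (LINT u|lborel. h u * cis2pi (- (of_int n * 1 * u)))" for n
    unfolding dyadic_corr_def h_def twisted_corr_def
    by (intro Bochner_Integration.integral_cong refl) (simp add: mult_ac)
  moreover have "(cmod (h u))\<^sup>2 = indicator (dyadic_Ioc j) u * (cmod (chirp_corr m u))\<^sup>2" for u
    by (simp add: h_def indicator_def)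
  ultimately show ?thesis by simp
qed

lemma integrable_indicator_dyadic_norm_chirp_corr_square:
  "integrable lborel (\<lambda>u. indicator (dyadic_Ioc j) u * (cmod (chirp_corr m u))\<^sup>2)"
proof (rule integrable_bounded_vanishing_outside_Icc[where B="(norm_pow_integral 2)\<^sup>2" and a=0 and b=1])
  show "(\<lambda>u. indicator (dyadic_Ioc j) u * (cmod (chirp_corr m u))\<^sup>2) \<in> borel_measurable lborel"
    unfolding dyadic_Ioc_def by measurable
  show "norm (indicator (dyadic_Ioc j) u * (cmod (chirp_corr m u))\<^sup>2) \<le> (norm_pow_integral 2)\<^sup>2"
    for u by (auto simp: indicator_def intro!: power_mono norm_chirp_corr_le)
  show "u \<notin> {0..1} \<Longrightarrow> indicator (dyadic_Ioc j) u * (cmod (chirp_corr m u))\<^sup>2 = 0" for u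
    using dyadic_Ioc_bounds[of u j] by (auto simp: indicator_def)
qed

lemma sum_norm_dyadic_corr_square_le:
  assumes N: "finite N"
  shows "(\<Sum>(n, m)\<in>N. (cmod (dyadic_corr n m j))\<^sup>2) \<le> norm_pow_integral 4 / 2"
proof -
  define N\<^sub>1 N\<^sub>2 where "N\<^sub>1 = fst ` N" and "N\<^sub>2 = snd ` N"
  have fin: "finite N\<^sub>1" "finite N\<^sub>2" using N by (auto simp: N\<^sub>1_def N\<^sub>2_def)
  have "(\<Sum>(n, m)\<in>N. (cmod (dyadic_corr n m j))\<^sup>2) \<le> (\<Sum>(n, m)\<in>N\<^sub>1 \<times> N\<^sub>2. (cmod (dyadic_corr n m j))\<^sup>2)"
    by (rule sum_mono2) (use fin in \<open>force simp: N\<^sub>1_def N\<^sub>2_def\<close>)+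
  also have "\<dots> = (\<Sum>m\<in>N\<^sub>2. \<Sum>n\<in>N\<^sub>1. (cmod (dyadic_corr n m j))\<^sup>2)"
    by (simp add: sum.cartesian_product[symmetric] sum.swap[of _ N\<^sub>1])
  also have "\<dots> \<le> (\<Sum>m\<in>N\<^sub>2. LINT u|lborel. indicator (dyadic_Ioc j) u * (cmod (chirp_corr m u))\<^sup>2)"
    by (intro sum_mono sum_norm_dyadic_corr_square_le_chirp_corr fin)
  also have "\<dots> = (LINT u|lborel. indicator (dyadic_Ioc j) u * (\<Sum>m\<in>N\<^sub>2. (cmod (chirp_corr m u))\<^sup>2))"
    using integrable_indicator_dyadic_norm_chirp_corr_square by (simp add: sum_distrib_left)
  also have "\<dots> \<le> (LINT u|lborel. indicator (dyadic_Ioc j) u * (2 ^ j * norm_pow_integral 4))"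
  proof (rule integral_mono)
    show "integrable lborel (\<lambda>u. indicator (dyadic_Ioc j) u * (\<Sum>m\<in>N\<^sub>2. (cmod (chirp_corr m u))\<^sup>2))"
      using integrable_indicator_dyadic_norm_chirp_corr_square by (simp add: sum_distrib_left)
    show "integrable lborel (\<lambda>u. indicator (dyadic_Ioc j) u * (2 ^ j * norm_pow_integral 4))"
      unfolding dyadic_Ioc_def by (intro integrable_mult_left integrable_real_indicator) auto
    show "indicator (dyadic_Ioc j) u * (\<Sum>m\<in>N\<^sub>2. (cmod (chirp_corr m u))\<^sup>2)
          \<le> indicator (dyadic_Ioc j) u * (2 ^ j * norm_pow_integral 4)" for u
      using sum_norm_chirp_corr_square_le_dyadic[of u j N\<^sub>2] fin by (auto simp: indicator_def)
  qed
  also have "\<dots> = 2 ^ j * norm_pow_integral 4 * ((1/2) ^ j - (1/2) ^ Suc j)"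
    by (simp add: dyadic_Ioc_def del: power_Suc)
  also have "\<dots> = norm_pow_integral 4 / 2"
    by (simp add: power_one_over field_simps)
  finally show ?thesis .
qed

lemma sum_norm_dyadic_corr_powr_le:
  assumes s: "s > 2" and N: "finite N"
  shows "(\<Sum>q\<in>N. cmod (dyadic_corr (fst q) (snd q) j) powr s)
           \<le> (norm_pow_integral 2 / 2) powr (s - 2) * (norm_pow_integral 4 / 2) * ((1/2) powr (s - 2)) ^ j"
proof -
  define c where "c = (norm_pow_integral 2 / 2) powr (s - 2) * ((1/2) powr (s - 2)) ^ j"
  have "((1/2::real) ^ j) powr (s - 2) = ((1/2) powr (s - 2)) ^ j"
    by (rule power_powr) simp
  moreover have "(norm_pow_integral 2 / 2) powr (s - 2) = (1/2) powr (s - 2) * norm_pow_integral 2 powr (s - 2)"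
    using powr_mult[of "1/2" "norm_pow_integral 2" "s - 2"] by simp
  ultimately have c_eq: "((1/2) ^ Suc j * norm_pow_integral 2) powr (s - 2) = c"
    unfolding c_def power_Suc powr_mult by (simp add: mult_ac)
  have "cmod (dyadic_corr n m j) powr s \<le> c * (cmod (dyadic_corr n m j))\<^sup>2" for n m
  proof -
    have "cmod (dyadic_corr n m j) powr s = cmod (dyadic_corr n m j) powr (s - 2) * (cmod (dyadic_corr n m j))\<^sup>2"
      using powr_add[of "cmod (dyadic_corr n m j)" "s - 2" 2] by (simp add: powr_numeral)
    also have "\<dots> \<le> ((1/2) ^ Suc j * norm_pow_integral 2) powr (s - 2) * (cmod (dyadic_corr n m j))\<^sup>2"
      using s by (intro mult_right_mono powr_mono2 norm_dyadic_corr_le) auto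
    finally show ?thesis unfolding c_eq .
  qed
  then have "(\<Sum>q\<in>N. cmod (dyadic_corr (fst q) (snd q) j) powr s)
             \<le> c * (\<Sum>(n, m)\<in>N. (cmod (dyadic_corr n m j))\<^sup>2)"
    by (simp add: sum_distrib_left sum_mono case_prod_unfold)
  also have "\<dots> \<le> c * (norm_pow_integral 4 / 2)"
    by (intro mult_left_mono sum_norm_dyadic_corr_square_le N) (simp add: c_def)
  finally show ?thesis by (simp add: c_def mult_ac)
qed

lemma sum_norm_half_corr_powr_le:
  assumes s: "s > 2" and N: "finite N"
  shows "(\<Sum>(n, m)\<in>N. cmod (half_corr n m) powr s)
           \<le> decay_sum_const s ((1/2) powr (s - 2))
               * ((norm_pow_integral 2 / 2) powr (s - 2) * (norm_pow_integral 4 / 2))"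
proof -
  define \<rho> where "\<rho> = (1/2::real) powr (s - 2)"
  define A where "A = (norm_pow_integral 2 / 2) powr (s - 2) * (norm_pow_integral 4 / 2)"
  have "0 < \<rho>" "\<rho> < 1" using s by (auto simp: \<rho>_def powr01_less_one)
  have partial: "(\<Sum>q\<in>N. cmod (\<Sum>j<J. dyadic_corr (fst q) (snd q) j) powr s)
                 \<le> decay_sum_const s \<rho> * A" for J
  proof -
    have "(\<Sum>q\<in>N. cmod (\<Sum>j<J. dyadic_corr (fst q) (snd q) j) powr s)
          \<le> (\<Sum>q\<in>N. (\<Sum>j<J. cmod (dyadic_corr (fst q) (snd q) j)) powr s)"
      using s by (intro sum_mono powr_mono2) (auto intro: norm_sum)
    also have "\<dots> \<le> decay_sum_const s \<rho> * A"
      using s N \<open>0 < \<rho>\<close> \<open>\<rho> < 1\<close> sum_norm_dyadic_corr_powr_le[OF s N]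
      by (intro sum_powr_sum_le_of_geometric_decay) (auto simp: A_def \<rho>_def)
    finally show ?thesis .
  qed
  have "(\<lambda>J. \<Sum>q\<in>N. cmod (\<Sum>j<J. dyadic_corr (fst q) (snd q) j) powr s)
          \<longlonglongrightarrow> (\<Sum>q\<in>N. cmod (half_corr (fst q) (snd q)) powr s)"
    using dyadic_corr_sums[unfolded sums_def] s
    by (intro tendsto_sum tendsto_powr' tendsto_norm tendsto_const) auto
  then show ?thesis
    unfolding case_prod_unfold \<rho>_def[symmetric] A_def[symmetric]
    by (rule LIMSEQ_le_const2) (use partial in blast)
qed

lemma power2_powr: "0 \<le> x \<Longrightarrow> (x\<^sup>2) powr s = x powr (2 * s)" for x s :: real
proof (cases "x = 0")
  case False
  assume "0 \<le> x"
  then have "x\<^sup>2 = x powr 2" using False by (simp add: powr_numeral)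
  then show ?thesis by (simp add: powr_powr)
qed simp

lemma powr_sqrt_bound_eq:
  fixes q s :: real
  assumes "0 \<le> q"
  shows "2 powr s * (sqrt q / 2) powr (s - 2) * (q / 2) = 2 * q powr (s / 2)"
proof (cases "q = 0")
  case False
  then have "0 < q" using assms by simp
  have "(sqrt q / 2) powr (s - 2) = q powr ((s - 2) / 2) / 2 powr (s - 2)"
    using assms by (simp add: powr_divide powr_half_sqrt[symmetric] powr_powr)
  moreover have "2 powr s = 2 powr (s - 2) * 4"
    using powr_add[of 2 "s - 2" 2] by simp
  moreover have "q powr ((s - 2) / 2) * q = q powr (s / 2)"
    using \<open>0 < q\<close> powr_add[of q "(s - 2) / 2" 1] by (simp add: diff_divide_distrib)
  ultimately show ?thesis by (simp add: field_simps)
qed simp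

lemma sum_norm_chirp_coeff_powr_le:
  assumes s: "s > 2" and N: "finite N"
  shows "(\<Sum>(n, m)\<in>N. cmod (chirp_coeff f n m) powr (2 * s))
           \<le> 2 * decay_sum_const s ((1/2) powr (s - 2)) * norm_pow_integral 4 powr (s / 2)"
proof -
  define C where "C = decay_sum_const s ((1/2) powr (s - 2))"
  have "0 \<le> C" using s by (simp add: C_def decay_sum_const_nonneg powr01_less_one)
  have coeff_le: "cmod (chirp_coeff f n m) powr (2 * s) \<le> 2 powr s * cmod (half_corr n m) powr s"
    for n m
  proof -
    have "cmod (chirp_coeff f n m) powr (2 * s) = ((cmod (chirp_coeff f n m))\<^sup>2) powr s"
      by (simp add: power2_powr)
    also have "\<dots> \<le> (2 * cmod (half_corr n m)) powr s"
      unfolding norm_chirp_coeff_square_eq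
      using s norm_chirp_coeff_square_eq[of n m] zero_le_power2[of "cmod (chirp_coeff f n m)"]
      by (intro powr_mono2) (auto simp: complex_Re_le_cmod)
    finally show ?thesis by (simp add: powr_mult)
  qed
  have "(\<Sum>(n, m)\<in>N. cmod (chirp_coeff f n m) powr (2 * s))
        \<le> 2 powr s * (\<Sum>(n, m)\<in>N. cmod (half_corr n m) powr s)"
    by (simp add: case_prod_unfold sum_distrib_left sum_mono coeff_le)
  also have "\<dots> \<le> 2 powr s * (C * ((norm_pow_integral 2 / 2) powr (s - 2) * (norm_pow_integral 4 / 2)))"
    using sum_norm_half_corr_powr_le[OF s N] by (simp add: C_def)
  also have "\<dots> \<le> 2 powr s * (C * ((sqrt (norm_pow_integral 4) / 2) powr (s - 2) * (norm_pow_integral 4 / 2)))"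
    using s \<open>0 \<le> C\<close> norm_pow_integral_2_le norm_pow_integral_nonneg
    by (intro mult_left_mono mult_right_mono powr_mono2 divide_right_mono) auto
  also have "\<dots> = 2 * C * norm_pow_integral 4 powr (s / 2)"
    using powr_sqrt_bound_eq[OF norm_pow_integral_nonneg[of 4], of s] by (simp add: mult_ac)
  finally show ?thesis by (simp add: C_def)
qed

lemma Lp_norm_4_eq: "Lp_norm lborel 4 f = ennreal (norm_pow_integral 4 powr (1/4))"
proof -
  have "(\<integral>\<^sup>+x. ennreal (cmod (f x) powr 4) \<partial>lborel) = ennreal (norm_pow_integral 4)"
    unfolding norm_pow_integral_def
    by (simp add: powr_numeral nn_integral_eq_integral integrable_norm_pow)
  then show ?thesis by (simp add: Lp_norm_def norm_pow_integral_nonneg)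
qed

lemma nn_integral_chirp_coeff_floor_le:
  assumes p: "p > 4"
  shows "(\<integral>\<^sup>+z. ennreal (cmod (chirp_coeff f \<lfloor>fst z\<rfloor> \<lfloor>snd z\<rfloor>) powr p) \<partial>(lborel :: (real \<times> real) measure))
           \<le> ennreal (2 * decay_sum_const (p / 2) ((1/2) powr (p / 2 - 2)) * norm_pow_integral 4 powr (p / 4))"
proof -
  have "(\<integral>\<^sup>+z. ennreal (cmod (chirp_coeff f \<lfloor>fst z\<rfloor> \<lfloor>snd z\<rfloor>) powr p) \<partial>(lborel :: (real \<times> real) measure))
        = (\<integral>\<^sup>+q. ennreal (cmod (chirp_coeff f (fst q) (snd q)) powr p) \<partial>count_space UNIV)"
    using nn_integral_lborel_floor_pair[of "\<lambda>q. ennreal (cmod (chirp_coeff f (fst q) (snd q)) powr p)"]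
    by simp
  also have "\<dots> \<le> ennreal (2 * decay_sum_const (p / 2) ((1/2) powr (p / 2 - 2)) * norm_pow_integral 4 powr (p / 4))"
  proof (rule nn_integral_count_space_le_of_finite_sums)
    fix N :: "(int \<times> int) set"
    assume "finite N"
    then have "(\<Sum>(n, m)\<in>N. cmod (chirp_coeff f n m) powr (2 * (p / 2)))
               \<le> 2 * decay_sum_const (p / 2) ((1/2) powr (p / 2 - 2)) * norm_pow_integral 4 powr (p / 2 / 2)"
      using p by (intro sum_norm_chirp_coeff_powr_le) auto
    then show "(\<Sum>q\<in>N. ennreal (cmod (chirp_coeff f (fst q) (snd q)) powr p))
               \<le> ennreal (2 * decay_sum_const (p / 2) ((1/2) powr (p / 2 - 2)) * norm_pow_integral 4 powr (p / 4))"
      by (simp add: sum_ennreal case_prod_unfold ennreal_leI)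
  qed
  finally show ?thesis .
qed

lemma Lp_norm_chirp_coeff_floor_le:
  assumes p: "p > 4"
  shows "Lp_norm (lborel :: (real \<times> real) measure) p (\<lambda>z. chirp_coeff f \<lfloor>fst z\<rfloor> \<lfloor>snd z\<rfloor>)
           \<le> ennreal ((2 * decay_sum_const (p / 2) ((1/2) powr (p / 2 - 2))) powr (1 / p)
                      * enn2real (Lp_norm lborel 4 f))"
proof -
  define K where "K = 2 * decay_sum_const (p / 2) ((1/2) powr (p / 2 - 2))"
  define I where "I = (\<integral>\<^sup>+z. ennreal (cmod (chirp_coeff f \<lfloor>fst z\<rfloor> \<lfloor>snd z\<rfloor>) powr p)
                         \<partial>(lborel :: (real \<times> real) measure))"
  have I_le: "I \<le> ennreal (K * norm_pow_integral 4 powr (p / 4))"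
    unfolding I_def K_def using p by (rule nn_integral_chirp_coeff_floor_le)
  then have "I \<noteq> \<infinity>"
    using le_less_trans[OF I_le ennreal_less_top] by simp
  have "0 \<le> K"
    using p by (simp add: K_def decay_sum_const_nonneg powr01_less_one)
  have "enn2real I \<le> K * norm_pow_integral 4 powr (p / 4)"
    using I_le \<open>0 \<le> K\<close> by (simp add: enn2real_leI)
  then have "enn2real I powr (1 / p) \<le> (K * norm_pow_integral 4 powr (p / 4)) powr (1 / p)"
    using p by (intro powr_mono2) auto
  also have "\<dots> = K powr (1 / p) * norm_pow_integral 4 powr (1 / 4)"
    using p by (simp add: powr_mult powr_powr)
  finally show ?thesis
    using \<open>I \<noteq> \<infinity>\<close> p unfolding Lp_norm_4_eq
    by (simp add: Lp_norm_def I_def[symmetric] K_def[symmetric] ennreal_leI)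
qed

end

section \<open>Reduction to the chirp coefficients\<close>

lemma bounded_on_01_ext0:
  assumes "continuous_on {0..1} g"
  obtains M where "bounded_on_01 (ext0 g) M"
proof -
  have "bounded (g ` {0..1})"
    by (intro compact_imp_bounded compact_continuous_image assms compact_Icc)
  then obtain M where M: "\<And>x. x \<in> {0..1} \<Longrightarrow> cmod (g x) \<le> M"
    unfolding bounded_iff by blast
  have "ext0 g = (\<lambda>x. indicator {0..1} x *\<^sub>R g x)"
    by (auto simp: ext0_def indicator_def)
  then have "ext0 g \<in> borel_measurable borel"
    using borel_measurable_continuous_on_indicator[OF _ assms] by simp
  moreover have "cmod (ext0 g x) \<le> max M 0" for x
    using M[of x] by (auto simp: ext0_def)
  ultimately have "bounded_on_01 (ext0 g) (max M 0)"
    by unfold_locales (auto simp: ext0_def)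
  then show thesis ..
qed

lemma exp_2pi_i_eq_cis2pi: "exp (2 * of_real pi * \<i> * of_int n * of_real x) = cis2pi (of_int n * x)"
  by (simp add: cis2pi_conv_exp mult_ac)

lemma E1_eq_chirp_coeff:
  assumes "\<forall>x\<in>{0..1}. \<phi> x = 1"
  shows "E1 \<phi> g = (\<lambda>z. chirp_coeff (ext0 g) \<lfloor>fst z\<rfloor> \<lfloor>snd z\<rfloor>)"
proof
  fix z :: "real \<times> real"
  obtain x t where z: "z = (x, t)" by fastforce
  have inner: "inner_L2 (ext0 g) (phi_nm \<phi> n m) = chirp_coeff (ext0 g) n m" for n m
    unfolding inner_L2_def chirp_coeff_def
  proof (intro Bochner_Integration.integral_cong refl)
    fix y
    show "ext0 g y * cnj (phi_nm \<phi> n m y) = ext0 g y * cis2pi (- (of_int n * y + of_int m * y\<^sup>2))"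
    proof (cases "y \<in> {0..1}")
      case True
      then have "phi_nm \<phi> n m y = cis2pi (of_int n * y) * cis2pi (of_int m * y\<^sup>2)"
        using assms exp_2pi_i_eq_cis2pi[of n y] exp_2pi_i_eq_cis2pi[of m "y\<^sup>2"]
        by (simp add: phi_nm_def)
      then show ?thesis
        by (simp add: cnj_cis2pi cis2pi_add[symmetric])
    qed (auto simp: ext0_def)
  qed
  have chi_iff: "chi k y = (if \<lfloor>y\<rfloor> = k then 1 else 0)" for k y
    by (simp add: chi_def indicator_def floor_eq_iff)
  define F where "F = (\<lambda>(n, m). inner_L2 (ext0 g) (phi_nm \<phi> n m) * chi n x * chi m t)"
  have "E1 \<phi> g z = infsum F UNIV"
    by (simp add: E1_def z F_def)
  also have "\<dots> = infsum F {(\<lfloor>x\<rfloor>, \<lfloor>t\<rfloor>)}"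
    by (rule infsum_cong_neutral) (auto simp: F_def chi_iff split: if_splits)
  also have "\<dots> = chirp_coeff (ext0 g) \<lfloor>fst z\<rfloor> \<lfloor>snd z\<rfloor>"
    by (simp add: F_def chi_iff inner z)
  finally show "E1 \<phi> g z = chirp_coeff (ext0 g) \<lfloor>fst z\<rfloor> \<lfloor>snd z\<rfloor>" .
qed

theorem proposition4p3:
  fixes \<phi> :: "real \<Rightarrow> real"
  assumes "smooth_compact_support \<phi>"
    and "\<forall>x\<in>{0..1}. \<phi> x = 1"
  shows "\<forall>\<epsilon>>0. \<exists>C. \<forall>g :: real \<Rightarrow> complex. continuous_on {0..1} g \<longrightarrow>
           Lp_norm (lborel :: (real \<times> real) measure) (4 + \<epsilon>) (E1 \<phi> g)
             \<le> ennreal (C * enn2real (Lp_norm lborel 4 (ext0 g)))"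
proof (intro allI impI)
  \<comment> \<open>Only the values of \<open>\<phi>\<close> on \<open>[0, 1]\<close> matter, since \<open>g\<close> is extended by zero.\<close>
  fix \<epsilon> :: real
  assume "\<epsilon> > 0"
  define p where "p = 4 + \<epsilon>"
  define C where "C = (2 * decay_sum_const (p / 2) ((1/2) powr (p / 2 - 2))) powr (1 / p)"
  have "Lp_norm lborel p (E1 \<phi> g) \<le> ennreal (C * enn2real (Lp_norm lborel 4 (ext0 g)))"
    if g: "continuous_on {0..1} g" for g
  proof -
    obtain M where "bounded_on_01 (ext0 g) M"
      by (rule bounded_on_01_ext0[OF g])
    then show ?thesis
      unfolding E1_eq_chirp_coeff[OF assms(2)] C_def
      using \<open>\<epsilon> > 0\<close> by (intro bounded_on_01.Lp_norm_chirp_coeff_floor_le) (auto simp: p_def)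
  qed
  then show "\<exists>C. \<forall>g :: real \<Rightarrow> complex. continuous_on {0..1} g \<longrightarrow>
               Lp_norm lborel (4 + \<epsilon>) (E1 \<phi> g) \<le> ennreal (C * enn2real (Lp_norm lborel 4 (ext0 g)))"
    unfolding p_def by blast
qed

end
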